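(* For every integer $N\ge1$, the family $(\mathscr W_\alpha)_{\alpha\in\Lambda^\star_N}$ is a basis of the space $H_N$.
   Context: $H_N$ is the space of functions on $\mathbb R^3$ of the form $v(x)=\sum_{k=0}^N\frac{p_k(x)}{(|x|^2+1)^{k+1/2}}$, where each $p_k$ is a real polynomial on $\mathbb R^3$ of degree at most $k$. Index sets: $\Lambda=\{(k,\ell,m)\in\mathbb N^2\times\mathbb Z:0\le\ell\le k,\ -\ell\le m\le\ell\}$, $\Lambda_k=\{(i,\ell,m)\in\Lambda:i=k\}$, $\Lambda^\star_N=\bigcup_{i=0}^N\Lambda_i$. Arar–Boulmezaoud functions: write points of $\mathbb S^3\subset\mathbb R^4$ as $\xi=(\sin\theta\cos\phi\sin\chi,\sin\theta\sin\phi\sin\chi,\cos\theta\sin\chi,\cos\chi)$, $\phi\in[0,2\pi)$, $\theta,\chi\in[0,\pi]$. $T_n$ is the Chebyshev polynomial of the first kind ($T_n(\cos t)=\cos(nt)$), $T_n^{(j)}$ its $j$-th derivative. For $-\ell\le m\le\ell$, $P_\ell^m(t)=\frac{(-1)^m}{2^\ell\ell!}(1-t^2)^{m/2}\frac{d^{\ell+m}}{dt^{\ell+m}}(t^2-1)^\ell$, $K_\ell^m=(-1)^m\sqrt{\frac{(\ell-m)!}{(\ell+m)!}}P_\ell^m$, $Y_{\ell,m}(\phi,\theta)=\sqrt{\frac{2\ell+1}{2\pi}}K_\ell^{|m|}(\cos\theta)y_m(\phi)$ with $y_m(\phi)=\cos(m\phi)$ ($m\ge1$), $1/\sqrt2$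 ($m=0$), $\sin(|m|\phi)$ ($m\le-1$). For $\alpha=(k,\ell,m)\in\Lambda$, $a_{k,\ell}=\frac{(k+1)\pi}{2}\frac{(k+\ell+1)!}{(k-\ell)!}$, $\mathscr Y_\alpha(\xi)=a_{k,\ell}^{-1/2}(\sin\chi)^\ell T^{(\ell+1)}_{k+1}(\cos\chi)Y_{\ell,m}(\phi,\theta)$, and $\mathscr W_\alpha(x)=\big(\frac{2}{|x|^2+1}\big)^{1/2}\mathscr Y_\alpha(\pi^{-1}(x))$ where $\pi^{-1}(x)=\big(\frac{2x_1}{|x|^2+1},\frac{2x_2}{|x|^2+1},\frac{2x_3}{|x|^2+1},\frac{|x|^2-1}{|x|^2+1}\big)$. *)

theory Defs
  imports Complex_Main "HOL-Computational_Algebra.Polynomial"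
begin

type_synonym pt3 = "real \<times> real \<times> real"
type_synonym pt4 = "real \<times> real \<times> real \<times> real"

definition sqn3 :: "pt3 \<Rightarrow> real" where
  "sqn3 x = (case x of (x1, x2, x3) \<Rightarrow> x1^2 + x2^2 + x3^2)"

definition mpoly3 :: "nat \<Rightarrow> (nat \<times> nat \<times> nat \<Rightarrow> real) \<Rightarrow> pt3 \<Rightarrow> real" where
  "mpoly3 k c x = (case x of (x1, x2, x3) \<Rightarrow>
     (\<Sum>(a, b, d) \<in> {(a, b, d). a + b + d \<le> k}. c (a, b, d) * x1^a * x2^b * x3^d))"

definition HN :: "nat \<Rightarrow> (pt3 \<Rightarrow> real) set" where
  "HN N = {v. \<exists>p :: nat \<Rightarrow> (nat \<times> nat \<times> nat \<Rightarrow> real).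
      \<forall>x. v x = (\<Sum>k\<le>N. mpoly3 k (p k) x / (sqn3 x + 1) powr (real k + 1/2))}"

definition Lambda :: "(nat \<times> nat \<times> int) set" where
  "Lambda = {(k, l, m). l \<le> k \<and> - int l \<le> m \<and> m \<le> int l}"

definition Lambda_k :: "nat \<Rightarrow> (nat \<times> nat \<times> int) set" where
  "Lambda_k k = {(i, l, m) \<in> Lambda. i = k}"

definition LambdaStar :: "nat \<Rightarrow> (nat \<times> nat \<times> int) set" where
  "LambdaStar N = (\<Union>i\<in>{0..N}. Lambda_k i)"

fun cheb :: "nat \<Rightarrow> real poly" where
  "cheb 0 = 1"
| "cheb (Suc 0) = [:0, 1:]"
| "cheb (Suc (Suc n)) = [:0, 2:] * cheb (Suc n) - cheb n"

definition chebD :: "nat \<Rightarrow> nat \<Rightarrow> real \<Rightarrow> real" where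
  "chebD n j t = poly ((pderiv ^^ j) (cheb n)) t"

definition assocP :: "nat \<Rightarrow> nat \<Rightarrow> real \<Rightarrow> real" where
  "assocP l m t = (-1)^m / (2^l * fact l) * sqrt (1 - t^2) ^ m
      * poly ((pderiv ^^ (l + m)) ([:-1, 0, 1:] ^ l)) t"

definition assocK :: "nat \<Rightarrow> nat \<Rightarrow> real \<Rightarrow> real" where
  "assocK l m t = (-1)^m * sqrt (fact (l - m) / fact (l + m)) * assocP l m t"

definition ytrig :: "int \<Rightarrow> real \<Rightarrow> real" where
  "ytrig m \<phi> = (if m \<ge> 1 then cos (real_of_int m * \<phi>)
                 else if m = 0 then 1 / sqrt 2 else sin (real_of_int (\<bar>m\<bar>) * \<phi>))"

definition Ysph :: "nat \<Rightarrow> int \<Rightarrow> real \<Rightarrow> real \<Rightarrow> real" where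
  "Ysph l m \<phi> \<theta> = sqrt ((2 * real l + 1) / (2 * pi)) * assocK l (nat \<bar>m\<bar>) (cos \<theta>) * ytrig m \<phi>"

definition acoef :: "nat \<Rightarrow> nat \<Rightarrow> real" where
  "acoef k l = (real k + 1) * pi / 2 * (fact (k + l + 1) / fact (k - l))"

definition Yang :: "nat \<times> nat \<times> int \<Rightarrow> real \<Rightarrow> real \<Rightarrow> real \<Rightarrow> real" where
  "Yang \<alpha> \<phi> \<theta> \<chi> = (case \<alpha> of (k, l, m) \<Rightarrow>
     acoef k l powr (-1/2) * sin \<chi> ^ l * chebD (k + 1) (l + 1) (cos \<chi>) * Ysph l m \<phi> \<theta>)"

definition sph3 :: "real \<Rightarrow> real \<Rightarrow> real \<Rightarrow> pt4" where
  "sph3 \<phi> \<theta> \<chi> = (sin \<theta> * cos \<phi> * sin \<chi>, sin \<theta> * sin \<phi> * sin \<chi>, cos \<theta> * sin \<chi>, cos \<chi>)"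

definition angle_ok :: "real \<times> real \<times> real \<Rightarrow> bool" where
  "angle_ok a = (case a of (\<phi>, \<theta>, \<chi>) \<Rightarrow> 0 \<le> \<phi> \<and> \<phi> < 2 * pi \<and> 0 \<le> \<theta> \<and> \<theta> \<le> pi \<and> 0 \<le> \<chi> \<and> \<chi> \<le> pi)"

definition Ycal :: "nat \<times> nat \<times> int \<Rightarrow> pt4 \<Rightarrow> real" where
  "Ycal \<alpha> \<xi> = (case (SOME a. angle_ok a \<and> \<xi> = (case a of (\<phi>, \<theta>, \<chi>) \<Rightarrow> sph3 \<phi> \<theta> \<chi>)) of
       (\<phi>, \<theta>, \<chi>) \<Rightarrow> Yang \<alpha> \<phi> \<theta> \<chi>)"

definition invstereo :: "pt3 \<Rightarrow> pt4" where
  "invstereo x = (case x of (x1, x2, x3) \<Rightarrow>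
     (2 * x1 / (sqn3 x + 1), 2 * x2 / (sqn3 x + 1), 2 * x3 / (sqn3 x + 1), (sqn3 x - 1) / (sqn3 x + 1)))"

definition Wfun :: "nat \<times> nat \<times> int \<Rightarrow> pt3 \<Rightarrow> real" where
  "Wfun \<alpha> x = sqrt (2 / (sqn3 x + 1)) * Ycal \<alpha> (invstereo x)"

definition family_basis :: "('b \<Rightarrow> real) set \<Rightarrow> 'a set \<Rightarrow> ('a \<Rightarrow> 'b \<Rightarrow> real) \<Rightarrow> bool" where
  "family_basis V I f \<longleftrightarrow>
     (\<forall>i\<in>I. f i \<in> V) \<and>
     (\<forall>c. (\<lambda>x. \<Sum>i\<in>I. c i * f i x) = (\<lambda>x. 0) \<longrightarrow> (\<forall>i\<in>I. c i = 0)) \<and>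
     (\<forall>v\<in>V. \<exists>c. v = (\<lambda>x. \<Sum>i\<in>I. c i * f i x))"

end

theory Submission
  imports Defs "HOL-Library.Function_Algebras"
begin

text \<open>
  Pulling back along the inverse stereographic projection, \<open>H\<^sub>N\<close> consists exactly of the lifts
  \<open>x \<mapsto> sqrt (2 / (|x|\<^sup>2 + 1)) P (\<pi>\<^sup>-\<^sup>1 x)\<close> of polynomials \<open>P\<close> of degree at most \<open>N\<close> on \<open>\<real>\<^sup>4\<close>.
  Since only the values of \<open>P\<close> on \<open>S\<^sup>3\<close> matter, monomials of degree at most one in \<open>y\<^sub>4\<close> suffice,
  and there are no more of those than elements of \<open>\<Lambda>\<^sup>\<star>\<^sub>N\<close>. Each \<open>\<Y>\<^sub>\<alpha>\<close> is the restriction of a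
  polynomial of degree \<open>k \<le> N\<close>, so \<open>\<W>\<^sub>\<alpha> \<in> H\<^sub>N\<close>. In the angles \<open>(\<phi>, \<theta>, \<chi>)\<close>, \<open>\<Y>\<^sub>\<alpha>\<close> factors into
  \<open>y\<^sub>m(\<phi>)\<close>, \<open>sin\<^sup>|\<^sup>m\<^sup>| \<theta>\<close> times a polynomial in \<open>cos \<theta>\<close> of degree \<open>\<ell> - |m|\<close>, and \<open>sin\<^sup>\<ell> \<chi>\<close> times
  a polynomial in \<open>cos \<chi>\<close> of degree \<open>k - \<ell>\<close>; distinct frequencies and degrees separate the
  variables one at a time, so the \<open>\<W>\<^sub>\<alpha>\<close> are linearly independent. Being as many as a spanning
  set of \<open>H\<^sub>N\<close>, they form a basis.
\<close>

section \<open>Bases of function spaces\<close>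

instantiation "fun" :: (type, real_vector) real_vector
begin
definition scaleR_fun :: "real \<Rightarrow> ('a \<Rightarrow> 'b) \<Rightarrow> 'a \<Rightarrow> 'b" where
  "scaleR_fun c f = (\<lambda>x. c *\<^sub>R f x)"
instance
  by standard (auto simp: scaleR_fun_def fun_eq_iff scaleR_add_right scaleR_add_left)
end

lemma scaleR_fun_apply [simp]: "(c *\<^sub>R f) x = c *\<^sub>R f x"
  by (simp add: scaleR_fun_def)

lemma sum_fun_apply: "(\<Sum>i\<in>A. f i) x = (\<Sum>i\<in>A. f i x)"
  by (induction A rule: infinite_finite_induct) auto

lemma lincomb_eq_sum_scaleR: "(\<lambda>x. \<Sum>i\<in>I. c i * f i x) = (\<Sum>i\<in>I. c i *\<^sub>R f i)"
  by (simp add: fun_eq_iff sum_fun_apply)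

lemma span_subset_if_independent_card_ge:
  fixes B T :: "'a::real_vector set"
  assumes T: "finite T" and B: "independent B" "B \<subseteq> span T" and card: "card T \<le> card B"
  shows "span T \<subseteq> span B"
proof (rule span_minimal[OF _ subspace_span], rule subsetI, rule ccontr)
  fix v assume "v \<in> T" "v \<notin> span B"
  have "finite B"
    using independent_span_bound[OF T B] by blast
  have "independent (insert v B)"
    using B(1) \<open>v \<notin> span B\<close> by (simp add: independent_insert)
  moreover have "insert v B \<subseteq> span T"
    using B(2) \<open>v \<in> T\<close> span_base by blast
  ultimately have "card (insert v B) \<le> card T"
    using independent_span_bound[OF T] by blast
  moreover have "card (insert v B) = Suc (card B)"
    using \<open>finite B\<close> \<open>v \<notin> span B\<close> span_base by (metis card_insert_disjoint)
  ultimately show False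
    using card by simp
qed

lemma family_basis_if_independent:
  fixes f :: "'a \<Rightarrow> 'b \<Rightarrow> real"
  assumes I: "finite I" and T: "finite T" "card T \<le> card I"
    and V: "V = span T" and f_in_V: "\<And>i. i \<in> I \<Longrightarrow> f i \<in> V"
    and indep: "\<And>c. (\<lambda>x. \<Sum>i\<in>I. c i * f i x) = (\<lambda>x. 0) \<Longrightarrow> \<forall>i\<in>I. c i = 0"
  shows "family_basis V I f"
proof -
  have inj: "inj_on f I"
  proof (rule inj_onI, rule ccontr)
    fix i j assume ij: "i \<in> I" "j \<in> I" "f i = f j" "i \<noteq> j"
    define c where "c k = (if k = i then 1 else if k = j then -1 else 0 :: real)" for k
    have "(\<Sum>k\<in>I. c k *\<^sub>R f k) = (\<Sum>k\<in>{i, j}. c k *\<^sub>R f k)"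
      using I ij by (intro sum.mono_neutral_right) (auto simp: c_def)
    also have "\<dots> = 0"
      using ij by (simp add: c_def)
    finally have "\<forall>k\<in>I. c k = 0"
      by (intro indep) (simp add: lincomb_eq_sum_scaleR zero_fun_def[symmetric])
    then have "c i = 0"
      using ij(1) by blast
    then show False
      by (simp add: c_def)
  qed
  have "independent (f ` I)"
  proof (rule independent_if_scalars_zero)
    fix u v assume "(\<Sum>w\<in>f ` I. u w *\<^sub>R w) = 0" "v \<in> f ` I"
    then show "u v = 0"
      using indep[of "u \<circ> f"]
      by (auto simp: lincomb_eq_sum_scaleR sum.reindex[OF inj] zero_fun_def[symmetric])
  qed (use I in simp)
  moreover have "f ` I \<subseteq> span T"
    using f_in_V V by auto
  ultimately have span_V: "V \<subseteq> span (f ` I)"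
    using span_subset_if_independent_card_ge[OF T(1)] T(2) V card_image[OF inj] by simp
  show ?thesis
    unfolding family_basis_def
  proof (intro conjI ballI allI impI)
    fix v assume "v \<in> V"
    then obtain u where "v = (\<Sum>w\<in>f ` I. u w *\<^sub>R w)"
      using span_V unfolding span_finite[OF finite_imageI[OF I]] by blast
    then show "\<exists>c. v = (\<lambda>x. \<Sum>i\<in>I. c i * f i x)"
      by (intro exI[of _ "u \<circ> f"]) (simp add: lincomb_eq_sum_scaleR sum.reindex[OF inj])
  qed (use f_in_V indep in auto)
qed

section \<open>Polynomials in one variable\<close>

lemma higher_pderiv_neq_0:
  fixes p :: "'a::{idom, semiring_char_0} poly"
  assumes "p \<noteq> 0" "r \<le> degree p"
  shows "(pderiv ^^ r) p \<noteq> 0"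
  using assms(2)
proof (induction r)
  case (Suc r)
  then have "degree ((pderiv ^^ r) p) \<noteq> 0"
    by (simp add: degree_higher_pderiv)
  then show ?case
    by (simp add: pderiv_eq_0_iff)
qed (use assms(1) in simp)

lemma lincomb_distinct_degrees_eq_0:
  fixes q :: "'k \<Rightarrow> 'a::idom poly"
  assumes K: "finite K" and q_nz: "\<And>k. k \<in> K \<Longrightarrow> q k \<noteq> 0"
    and inj: "inj_on (\<lambda>k. degree (q k)) K"
    and S: "infinite S" and zero: "\<And>t. t \<in> S \<Longrightarrow> (\<Sum>k\<in>K. e k * poly (q k) t) = 0"
  shows "\<forall>k\<in>K. e k = 0"
proof (rule ccontr)
  define K' where "K' = {k\<in>K. e k \<noteq> 0}"
  assume "\<not> (\<forall>k\<in>K. e k = 0)"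
  then have K': "finite K'" "K' \<noteq> {}"
    using K by (auto simp: K'_def)
  define R where "R = (\<Sum>k\<in>K. smult (e k) (q k))"
  have "S \<subseteq> {t. poly R t = 0}"
    using zero by (auto simp: R_def poly_sum)
  then have "R = 0"
    using S poly_roots_finite finite_subset by blast
  have "Max ((\<lambda>k. degree (q k)) ` K') \<in> (\<lambda>k. degree (q k)) ` K'"
    using K' by (intro Max_in) auto
  then obtain k0 where k0: "k0 \<in> K'" "degree (q k0) = Max ((\<lambda>k. degree (q k)) ` K')"
    by auto
  have coeff_other: "coeff (smult (e k) (q k)) (degree (q k0)) = 0" if "k \<in> K - {k0}" for k
  proof (cases "k \<in> K'")
    case True
    then have "degree (q k) \<le> degree (q k0)"
      using k0(2) K' by simp
    moreover have "degree (q k) \<noteq> degree (q k0)"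
      using inj that k0(1) by (auto simp: K'_def inj_on_def)
    ultimately show ?thesis
      by (simp add: coeff_eq_0)
  qed (use that in \<open>simp add: K'_def\<close>)
  have "(\<Sum>k\<in>K - {k0}. coeff (smult (e k) (q k)) (degree (q k0))) = 0"
    by (rule sum.neutral) (use coeff_other in blast)
  moreover have "k0 \<in> K"
    using k0(1) by (simp add: K'_def)
  ultimately have "coeff R (degree (q k0)) = coeff (smult (e k0) (q k0)) (degree (q k0))"
    using K unfolding R_def coeff_sum by (simp only: sum.remove) simp
  then have "coeff R (degree (q k0)) = e k0 * lead_coeff (q k0)"
    by simp
  moreover have "e k0 * lead_coeff (q k0) \<noteq> 0"
    using k0(1) q_nz by (simp add: K'_def)
  ultimately show False
    using \<open>R = 0\<close> by simp
qed

lemma lincomb_sin_power_poly_cos_eq_0: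
  fixes q :: "'k \<Rightarrow> real poly"
  assumes "finite K" "\<And>k. k \<in> K \<Longrightarrow> q k \<noteq> 0" "inj_on (\<lambda>k. degree (q k)) K"
    and zero: "\<And>t. 0 < t \<Longrightarrow> t < pi \<Longrightarrow> (\<Sum>k\<in>K. e k * (sin t ^ n * poly (q k) (cos t))) = 0"
  shows "\<forall>k\<in>K. e k = 0"
proof (rule lincomb_distinct_degrees_eq_0[OF assms(1-3)])
  show "infinite {-1<..<1::real}"
    by simp
  fix s :: real assume "s \<in> {-1<..<1}"
  then have s: "0 < arccos s" "arccos s < pi" "cos (arccos s) = s"
    using arccos_lt_bounded[of s] by auto
  have "sin (arccos s) ^ n * (\<Sum>k\<in>K. e k * poly (q k) s) = 0"
    using zero[OF s(1,2)] by (simp add: s(3) sum_distrib_left algebra_simps)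
  then show "(\<Sum>k\<in>K. e k * poly (q k) s) = 0"
    using sin_gt_zero[OF s(1,2)] by simp
qed

definition has_parity :: "nat \<Rightarrow> 'a::comm_semiring_1 poly \<Rightarrow> bool" where
  "has_parity r p \<longleftrightarrow> (\<forall>j. odd (j + r) \<longrightarrow> coeff p j = 0)"

lemma has_parity_mult:
  assumes "has_parity 0 p" "has_parity 0 q"
  shows "has_parity 0 (p * q)"
  unfolding has_parity_def
proof (intro allI impI)
  fix j :: nat assume j: "odd (j + 0)"
  have "coeff p i * coeff q (j - i) = 0" if "i \<le> j" for i
  proof (cases "odd i")
    case False
    then have "odd (j - i)"
      using j that by (simp add: even_diff_nat)
    then show ?thesis
      using assms(2) by (simp add: has_parity_def)
  qed (use assms(1) in \<open>simp add: has_parity_def\<close>)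
  then show "coeff (p * q) j = 0"
    by (simp add: coeff_mult)
qed

lemma has_parity_power: "has_parity 0 p \<Longrightarrow> has_parity 0 (p ^ n)"
proof (induction n)
  case 0
  show ?case
    by (auto simp: has_parity_def coeff_1 odd_pos)
qed (simp add: has_parity_mult)

lemma has_parity_higher_pderiv: "has_parity 0 p \<Longrightarrow> has_parity r ((pderiv ^^ r) p)"
  by (induction r) (auto simp: has_parity_def coeff_pderiv)

section \<open>Chebyshev polynomials and the functions \<open>y\<^sub>m\<close>\<close>

lemma degree_three_term_recurrence:
  fixes p :: "nat \<Rightarrow> real poly"
  assumes p0: "p 0 = 1" and p1: "degree (p 1) = 1"
    and rec: "\<And>n. p (Suc (Suc n)) = [:0, 2:] * p (Suc n) - p n"
  shows "degree (p n) = n" and "p n \<noteq> 0"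
proof -
  have "degree (p n) = n \<and> degree (p (Suc n)) = Suc n"
  proof (induction n)
    case (Suc n)
    then have "p (Suc n) \<noteq> 0"
      by auto
    then have "degree ([:0, 2:] * p (Suc n)) = Suc (Suc n)"
      using Suc by (simp add: degree_mult_eq)
    then have "degree ([:0, 2:] * p (Suc n) + - p n) = Suc (Suc n)"
      using Suc by (subst degree_add_eq_left) auto
    then have "degree (p (Suc (Suc n))) = Suc (Suc n)"
      by (simp add: rec)
    then show ?case
      using Suc by simp
  qed (use p0 p1 in simp)
  then show "degree (p n) = n"
    by simp
  then show "p n \<noteq> 0"
    using p0 by (cases n) auto
qed

lemma cheb_degree: "degree (cheb n) = n" and cheb_neq_0: "cheb n \<noteq> 0"
  by (rule degree_three_term_recurrence; simp)+

fun chebU :: "nat \<Rightarrow> real poly" where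
  "chebU 0 = 1"
| "chebU (Suc 0) = [:0, 2:]"
| "chebU (Suc (Suc n)) = [:0, 2:] * chebU (Suc n) - chebU n"

lemma chebU_degree: "degree (chebU n) = n" and chebU_neq_0: "chebU n \<noteq> 0"
  by (rule degree_three_term_recurrence; simp)+

lemma poly_cheb_cos: "poly (cheb n) (cos x) = cos (real n * x)"
proof (induction n rule: cheb.induct)
  case (3 n)
  have cos_sum_diff: "cos (t + x) + cos (t - x) = 2 * cos x * cos t" for t
    by (simp add: cos_add cos_diff)
  have e: "real (Suc n) * x + x = real (Suc (Suc n)) * x" "real (Suc n) * x - x = real n * x"
    by (simp_all add: algebra_simps)
  have "cos (real (Suc (Suc n)) * x) + cos (real n * x) = 2 * cos x * cos (real (Suc n) * x)"
    using cos_sum_diff[of "real (Suc n) * x"] unfolding e .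
  moreover have "poly (cheb (Suc (Suc n))) (cos x) = 2 * cos x * cos (real (Suc n) * x) - cos (real n * x)"
    unfolding cheb.simps poly_diff poly_mult 3 by (simp add: mult_ac)
  ultimately show ?case
    by linarith
qed simp_all

lemma sin_poly_chebU_cos: "sin x * poly (chebU n) (cos x) = sin (real (Suc n) * x)"
proof (induction n rule: chebU.induct)
  case 2
  show ?case
    using sin_double[of x] by (simp add: mult_ac)
next
  case (3 n)
  have sin_sum_diff: "sin (t + x) + sin (t - x) = 2 * cos x * sin t" for t
    by (simp add: sin_add sin_diff)
  have e: "real (Suc (Suc n)) * x + x = real (Suc (Suc (Suc n))) * x"
    "real (Suc (Suc n)) * x - x = real (Suc n) * x"
    by (simp_all add: algebra_simps)
  have "sin (real (Suc (Suc (Suc n))) * x) + sin (real (Suc n) * x) = 2 * cos x * sin (real (Suc (Suc n)) * x)"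
    using sin_sum_diff[of "real (Suc (Suc n)) * x"] unfolding e .
  moreover have "sin x * poly (chebU (Suc (Suc n))) (cos x)
      = 2 * cos x * (sin x * poly (chebU (Suc n)) (cos x)) - sin x * poly (chebU n) (cos x)"
    unfolding chebU.simps poly_diff poly_mult by (simp add: algebra_simps)
  ultimately show ?case
    unfolding 3 by linarith
qed simp

lemma ytrig_nonneg: "0 \<le> m \<Longrightarrow> ytrig m \<phi> = (if m = 0 then 1 / sqrt 2 else 1) * poly (cheb (nat m)) (cos \<phi>)"
  by (cases "m = 0") (auto simp: ytrig_def poly_cheb_cos)

lemma ytrig_neg:
  assumes "m < 0"
  shows "ytrig m \<phi> = sin \<phi> * poly (chebU (nat (- m) - 1)) (cos \<phi>)"
proof -
  have "Suc (nat (- m) - 1) = nat \<bar>m\<bar>"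
    using assms by simp
  then have "sin \<phi> * poly (chebU (nat (- m) - 1)) (cos \<phi>) = sin (real (nat \<bar>m\<bar>) * \<phi>)"
    by (metis sin_poly_chebU_cos)
  then show ?thesis
    using assms by (simp add: ytrig_def)
qed

lemma ytrig_lincomb_split:
  assumes "finite M"
  shows "(\<Sum>m\<in>M. d m * ytrig m \<phi>) =
    (\<Sum>m\<in>{m\<in>M. 0 \<le> m}. (d m * (if m = 0 then 1 / sqrt 2 else 1)) * poly (cheb (nat m)) (cos \<phi>)) +
    sin \<phi> * (\<Sum>m\<in>{m\<in>M. m < 0}. d m * poly (chebU (nat (- m) - 1)) (cos \<phi>))"
proof -
  have "M = {m\<in>M. 0 \<le> m} \<union> {m\<in>M. m < 0}"
    by auto
  then have "(\<Sum>m\<in>M. d m * ytrig m \<phi>) =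
      (\<Sum>m\<in>{m\<in>M. 0 \<le> m}. d m * ytrig m \<phi>) + (\<Sum>m\<in>{m\<in>M. m < 0}. d m * ytrig m \<phi>)"
    using assms by (metis (no_types, lifting) sum.union_disjoint finite_Un disjoint_iff mem_Collect_eq not_less)
  then show ?thesis
    unfolding sum_distrib_left by (simp add: ytrig_nonneg ytrig_neg mult_ac)
qed

lemma ytrig_lincomb_eq_0:
  assumes M: "finite M"
    and zero: "\<And>\<phi>. 0 \<le> \<phi> \<Longrightarrow> \<phi> < 2 * pi \<Longrightarrow> (\<Sum>m\<in>M. d m * ytrig m \<phi>) = 0"
  shows "\<forall>m\<in>M. d m = 0"
proof -
  define A where "A = {m\<in>M. 0 \<le> m}"
  define B where "B = {m\<in>M. m < 0}"
  define w where "w m = d m * (if m = 0 then 1 / sqrt 2 else 1)" for m :: int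
  define E where "E t = (\<Sum>m\<in>A. w m * poly (cheb (nat m)) t)" for t
  define Od where "Od t = (\<Sum>m\<in>B. d m * poly (chebU (nat (- m) - 1)) t)" for t
  \<comment> \<open>cos is even and sin odd under \<open>\<phi> \<mapsto> 2\<pi> - \<phi>\<close>, which separates the two halves.\<close>
  have EO: "E (cos t) = 0 \<and> sin t * Od (cos t) = 0" if "0 < t" "t < pi" for t
  proof -
    have "E (cos t) + sin t * Od (cos t) = 0" "E (cos t) - sin t * Od (cos t) = 0"
      using zero[of t] zero[of "2 * pi - t"] ytrig_lincomb_split[OF M, of d] that
      by (simp_all add: E_def Od_def w_def A_def B_def)
    then show ?thesis
      by linarith
  qed
  have A_zero: "\<forall>m\<in>A. w m = 0"
  proof (rule lincomb_sin_power_poly_cos_eq_0[where n = 0])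
    show "inj_on (\<lambda>m. degree (cheb (nat m))) A"
      unfolding cheb_degree by (rule inj_onI) (auto simp: A_def)
    show "(\<Sum>m\<in>A. w m * (sin t ^ 0 * poly (cheb (nat m)) (cos t))) = 0" if "0 < t" "t < pi" for t
      using EO[OF that] by (simp add: E_def)
  qed (use M in \<open>simp_all add: A_def cheb_neq_0\<close>)
  have B_zero: "\<forall>m\<in>B. d m = 0"
  proof (rule lincomb_sin_power_poly_cos_eq_0[where n = 1])
    show "inj_on (\<lambda>m. degree (chebU (nat (- m) - 1))) B"
      unfolding chebU_degree by (rule inj_onI) (auto simp: B_def)
    show "(\<Sum>m\<in>B. d m * (sin t ^ 1 * poly (chebU (nat (- m) - 1)) (cos t))) = 0" if "0 < t" "t < pi" for t
      using EO[OF that] by (simp add: Od_def sum_distrib_left mult.left_commute)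
  qed (use M in \<open>simp_all add: B_def chebU_neq_0\<close>)
  show ?thesis
  proof
    fix m assume m: "m \<in> M"
    show "d m = 0"
    proof (cases "0 \<le> m")
      case True
      then have "w m = 0"
        using A_zero m by (simp add: A_def)
      then show ?thesis
        by (simp add: w_def split: if_splits)
    qed (use B_zero m in \<open>simp add: B_def\<close>)
  qed
qed

section \<open>Polynomial functions on \<open>\<real>\<^sup>4\<close>\<close>

definition coord :: "nat \<Rightarrow> pt4 \<Rightarrow> real" where
  "coord i y = (case y of (y1, y2, y3, y4) \<Rightarrow>
     if i = 0 then y1 else if i = 1 then y2 else if i = 2 then y3 else y4)"

inductive poly4 :: "nat \<Rightarrow> (pt4 \<Rightarrow> real) \<Rightarrow> bool" where
  poly4_const: "poly4 n (\<lambda>_. c)"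
| poly4_coord_mult: "i < 4 \<Longrightarrow> poly4 n f \<Longrightarrow> poly4 (Suc n) (\<lambda>y. coord i y * f y)"
| poly4_add: "poly4 n f \<Longrightarrow> poly4 n g \<Longrightarrow> poly4 n (\<lambda>y. f y + g y)"
| poly4_scale: "poly4 n f \<Longrightarrow> poly4 n (\<lambda>y. c * f y)"
| poly4_Suc: "poly4 n f \<Longrightarrow> poly4 (Suc n) f"

lemma poly4_mono: "poly4 n f \<Longrightarrow> n \<le> m \<Longrightarrow> poly4 m f"
  by (induction m) (auto intro: poly4_Suc simp: le_Suc_eq)

lemma poly4_mult: "poly4 a f \<Longrightarrow> poly4 b g \<Longrightarrow> poly4 (a + b) (\<lambda>y. f y * g y)"
proof (induction a f rule: poly4.induct)
  case (poly4_const n c)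
  then show ?case
    using poly4_mono poly4_scale by fastforce
next
  case (poly4_coord_mult i n f)
  then have "poly4 (Suc (n + b)) (\<lambda>y. coord i y * (f y * g y))"
    by (intro poly4.poly4_coord_mult)
  then show ?case
    by (simp add: mult.assoc)
next
  case (poly4_add n f g')
  then show ?case
    using poly4.poly4_add[OF poly4_add.IH] by (simp add: distrib_right)
next
  case (poly4_scale n f c)
  then show ?case
    using poly4.poly4_scale[OF poly4_scale.IH, of c] by (simp add: mult.assoc)
qed (simp add: poly4.poly4_Suc)

lemma poly4_coord: "i < 4 \<Longrightarrow> poly4 1 (coord i)"
  using poly4_coord_mult[OF _ poly4_const[of 0 1], of i] by simp

lemma poly4_power: "poly4 d h \<Longrightarrow> poly4 (d * n) (\<lambda>y. h y ^ n)"
proof (induction n)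
  case 0
  then show ?case
    using poly4_const[of 0 1] by simp
next
  case (Suc n)
  then show ?case
    using poly4_mult[OF Suc.prems Suc.IH[OF Suc.prems]] by (simp add: add.commute)
qed

lemma poly4_sum:
  "finite A \<Longrightarrow> (\<And>i. i \<in> A \<Longrightarrow> poly4 n (f i)) \<Longrightarrow> poly4 n (\<lambda>y. \<Sum>i\<in>A. f i y)"
  by (induction A rule: finite_induct) (auto intro: poly4_add poly4_const[of n 0, simplified])

lemma poly4_diff: "poly4 n f \<Longrightarrow> poly4 n g \<Longrightarrow> poly4 n (\<lambda>y. f y - g y)"
  using poly4_add[of n f "\<lambda>y. (-1) * g y"] poly4_scale[of n g "-1"] by simp

lemma poly4_poly: "poly4 1 h \<Longrightarrow> poly4 (degree p) (\<lambda>y. poly p (h y))"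
proof (induction p)
  case (pCons a p)
  show ?case
  proof (cases "p = 0")
    case False
    have "poly4 (1 + degree p) (\<lambda>y. h y * poly p (h y))"
      by (rule poly4_mult[OF pCons.prems pCons.IH[OF pCons.prems]])
    then have "poly4 (1 + degree p) (\<lambda>y. a + h y * poly p (h y))"
      using poly4_add poly4_const by blast
    then show ?thesis
      using False by simp
  qed (simp add: poly4_const)
qed (simp add: poly4_const)

section \<open>The sphere \<open>S\<^sup>3\<close> and stereographic projection\<close>

definition S3 :: "pt4 set" where
  "S3 = {(y1, y2, y3, y4). y1^2 + y2^2 + y3^2 + y4^2 = 1}"

lemma sqn3_simp [simp]: "sqn3 (x1, x2, x3) = x1^2 + x2^2 + x3^2"
  by (simp add: sqn3_def)

lemma sqn3_nonneg: "0 \<le> sqn3 x"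
  by (cases x) simp

lemma fun_eq3: "(\<And>x1 x2 x3. f (x1, x2, x3) = g (x1, x2, x3)) \<Longrightarrow> f = g"
  by (rule ext) (metis prod_cases3)

lemma invstereo_simp: "invstereo (x1, x2, x3) =
  (let q = x1^2 + x2^2 + x3^2 in (2 * x1 / (q + 1), 2 * x2 / (q + 1), 2 * x3 / (q + 1), (q - 1) / (q + 1)))"
  by (simp add: invstereo_def Let_def)

lemma invstereo_in_S3: "invstereo x \<in> S3"
proof -
  obtain x1 x2 x3 where x: "x = (x1, x2, x3)"
    by (metis prod_cases3)
  define q where "q = x1^2 + x2^2 + x3^2"
  have "0 \<le> q"
    by (simp add: q_def)
  then have "(2 * x1)^2 + (2 * x2)^2 + (2 * x3)^2 + (q - 1)^2 = (q + 1)^2"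
    by (simp add: q_def power2_eq_square algebra_simps)
  with \<open>0 \<le> q\<close> show ?thesis
    by (simp add: S3_def x invstereo_simp q_def[symmetric] power_divide add_divide_distrib[symmetric])
qed

lemma invstereo_onto:
  assumes "(y1, y2, y3, y4) \<in> S3" "y4 \<noteq> 1"
  shows "invstereo (y1 / (1 - y4), y2 / (1 - y4), y3 / (1 - y4)) = (y1, y2, y3, y4)"
proof -
  define w where "w = 1 - y4"
  have w: "w \<noteq> 0"
    using assms(2) by (simp add: w_def)
  define q where "q = (y1 / w)^2 + (y2 / w)^2 + (y3 / w)^2"
  have "y1^2 + y2^2 + y3^2 = (1 - y4) * (1 + y4)"
    using assms(1) by (simp add: S3_def algebra_simps power2_eq_square)
  then have "q = (1 + y4) / w"
    using w by (simp add: q_def power_divide add_divide_distrib[symmetric] w_def power2_eq_square)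
  then have "q + 1 = 2 / w" "q - 1 = 2 * y4 / w"
    using w by (simp_all add: w_def field_simps)
  then show ?thesis
    using w by (simp add: invstereo_simp Let_def q_def[symmetric] w_def[symmetric])
qed

lemma sph3_in_S3: "sph3 \<phi> \<theta> \<chi> \<in> S3"
proof -
  have "(sin \<theta> * cos \<phi> * sin \<chi>)^2 + (sin \<theta> * sin \<phi> * sin \<chi>)^2 + (cos \<theta> * sin \<chi>)^2
      = (sin \<chi>)^2 * ((sin \<theta>)^2 * ((sin \<phi>)^2 + (cos \<phi>)^2) + (cos \<theta>)^2)"
    by algebra
  then show ?thesis
    by (simp add: S3_def sph3_def)
qed

lemma polar_angle_2pi:
  fixes u v :: real
  obtains \<phi> where "0 \<le> \<phi>" "\<phi> < 2 * pi"
    "u = sqrt (u^2 + v^2) * cos \<phi>" "v = sqrt (u^2 + v^2) * sin \<phi>"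
proof (cases "u = 0 \<and> v = 0")
  case False
  define r where "r = sqrt (u^2 + v^2)"
  have "0 < u^2 + v^2"
    using False by (simp add: sum_power2_gt_zero_iff)
  then have "0 < r"
    by (simp add: r_def)
  have "(u / r)^2 + (v / r)^2 = 1"
    using False by (simp add: r_def power_divide add_divide_distrib[symmetric])
  then obtain \<phi> where \<phi>: "0 \<le> \<phi>" "\<phi> < 2 * pi" "u / r = cos \<phi>" "v / r = sin \<phi>"
    by (rule sincos_total_2pi)
  then have "u = r * cos \<phi>" "v = r * sin \<phi>"
    using \<open>0 < r\<close> by (simp_all add: field_simps)
  then show ?thesis
    using that[of \<phi>] \<phi>(1,2) unfolding r_def[symmetric] by blast
qed (use that[of 0] in simp)

lemma polar_angle_pi:
  fixes z s :: real
  assumes "z^2 \<le> s^2" "0 \<le> s"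
  obtains \<theta> where "0 \<le> \<theta>" "\<theta> \<le> pi" "z = s * cos \<theta>" "s * sin \<theta> = sqrt (s^2 - z^2)"
proof (cases "s = 0")
  case False
  with assms have "0 < s" "\<bar>z\<bar> \<le> s"
    using abs_le_square_iff[of z s] by auto
  then have z: "-1 \<le> z / s" "z / s \<le> 1"
    by (auto simp: divide_le_eq_1 le_divide_eq abs_le_iff)
  have "s * sqrt (1 - (z / s)^2) = sqrt (s^2 * (1 - (z / s)^2))"
    using \<open>0 < s\<close> by (simp add: real_sqrt_mult)
  also have "s^2 * (1 - (z / s)^2) = s^2 - z^2"
    using \<open>0 < s\<close> by (simp add: field_simps)
  finally have "s * sqrt (1 - (z / s)^2) = sqrt (s^2 - z^2)" .
  with \<open>0 < s\<close> show ?thesis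
    using that[of "arccos (z / s)"] arccos_bounded[OF z] z by (simp add: sin_arccos)
qed (use assms that[of 0] in simp)

lemma S3_angles:
  assumes "y \<in> S3"
  shows "\<exists>a. angle_ok a \<and> y = (case a of (\<phi>, \<theta>, \<chi>) \<Rightarrow> sph3 \<phi> \<theta> \<chi>)"
proof -
  obtain y1 y2 y3 y4 where y_eq: "y = (y1, y2, y3, y4)"
    by (metis prod_cases4)
  have y: "1 - y4^2 = y1^2 + y2^2 + y3^2"
    using assms by (simp add: S3_def y_eq)
  then obtain \<chi> where \<chi>: "0 \<le> \<chi>" "\<chi> \<le> pi" "y4 = cos \<chi>" "sin \<chi> = sqrt (y1^2 + y2^2 + y3^2)"
    using polar_angle_pi[of y4 1] by (smt (verit) mult_1 power_one zero_le_power2)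
  then have "y3^2 \<le> (sin \<chi>)^2" "0 \<le> sin \<chi>"
    by simp_all
  then obtain \<theta> where \<theta>: "0 \<le> \<theta>" "\<theta> \<le> pi" "y3 = sin \<chi> * cos \<theta>"
      "sin \<chi> * sin \<theta> = sqrt (y1^2 + y2^2)"
    using polar_angle_pi[of y3 "sin \<chi>"] \<chi>(4) by auto
  obtain \<phi> where \<phi>: "0 \<le> \<phi>" "\<phi> < 2 * pi"
    "y1 = sqrt (y1^2 + y2^2) * cos \<phi>" "y2 = sqrt (y1^2 + y2^2) * sin \<phi>"
    by (rule polar_angle_2pi)
  moreover have "sqrt (y1^2 + y2^2) = sin \<theta> * sin \<chi>"
    using \<theta>(4) by (simp add: mult.commute)
  ultimately have "y1 = sin \<theta> * cos \<phi> * sin \<chi>" "y2 = sin \<theta> * sin \<phi> * sin \<chi>"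
    by (simp_all only:) (simp_all add: mult_ac)
  with \<chi>(1-3) \<theta>(1-3) \<phi>(1,2) show ?thesis
    by (intro exI[of _ "(\<phi>, \<theta>, \<chi>)"]) (simp add: y_eq angle_ok_def sph3_def mult.commute)
qed

section \<open>Lifted polynomials\<close>

definition lift :: "(pt4 \<Rightarrow> real) \<Rightarrow> pt3 \<Rightarrow> real" where
  "lift P x = sqrt (2 / (sqn3 x + 1)) * P (invstereo x)"

lemma lift_add: "lift (\<lambda>y. f y + g y) = lift f + lift g"
  by (simp add: lift_def fun_eq_iff distrib_left)

lemma lift_scale: "lift (\<lambda>y. c * f y) = c *\<^sub>R lift f"
  by (simp add: lift_def fun_eq_iff)

lemma lift_diff: "lift (\<lambda>y. f y - g y) = lift f - lift g"
  by (simp add: lift_def fun_eq_iff right_diff_distrib)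

fun monom4 :: "nat \<times> nat \<times> nat \<times> nat \<Rightarrow> pt4 \<Rightarrow> real" where
  "monom4 (a, b, c, e) (y1, y2, y3, y4) = y1^a * y2^b * y3^c * y4^e"

lemma monom4_eq_coords:
  "monom4 (a, b, c, e) y = coord 0 y ^ a * coord 1 y ^ b * coord 2 y ^ c * coord 3 y ^ e"
  by (cases y) (simp add: coord_def)

definition reduced_exps :: "nat \<Rightarrow> (nat \<times> nat \<times> nat \<times> nat) set" where
  "reduced_exps N = {(a, b, c, e). e \<le> 1 \<and> a + b + c + e \<le> N}"

definition lifted_monoms :: "nat \<Rightarrow> (pt3 \<Rightarrow> real) set" where
  "lifted_monoms N = (\<lambda>\<beta>. lift (monom4 \<beta>)) ` reduced_exps N"

lemma finite_reduced_exps: "finite (reduced_exps N)"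
proof -
  have "reduced_exps N \<subseteq> {..N} \<times> {..N} \<times> {..N} \<times> {..N}"
    by (auto simp: reduced_exps_def)
  then show ?thesis
    by (rule finite_subset) auto
qed

lemma finite_lifted_monoms: "finite (lifted_monoms N)"
  by (simp add: lifted_monoms_def finite_reduced_exps)

lemma lifted_monoms_mono: "n \<le> N \<Longrightarrow> lifted_monoms n \<subseteq> lifted_monoms N"
  by (auto simp: lifted_monoms_def reduced_exps_def)

lemma lift_monom4_in_span: "\<beta> \<in> reduced_exps N \<Longrightarrow> lift (monom4 \<beta>) \<in> span (lifted_monoms N)"
  by (rule span_base) (auto simp: lifted_monoms_def)

lemma coord_mult_monom4:
  assumes "i < 4"
  shows "(\<lambda>y. coord i y * monom4 (a, b, c, e) y) =
    monom4 (a + of_bool (i = 0), b + of_bool (i = 1), c + of_bool (i = 2), e + of_bool (i = 3))"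
proof -
  consider "i = 0" | "i = 1" | "i = 2" | "i = 3"
    using assms by linarith
  then show ?thesis
    by cases (simp_all add: fun_eq_iff monom4_eq_coords mult_ac)
qed

text \<open>On the sphere \<open>y4\<^sup>2 = 1 - y1\<^sup>2 - y2\<^sup>2 - y3\<^sup>2\<close>, so after lifting it suffices to keep
  monomials of degree at most one in \<open>y4\<close>.\<close>

lemma lift_monom4_y4_square:
  "lift (monom4 (a, b, c, 2)) = lift (monom4 (a, b, c, 0)) - lift (monom4 (a + 2, b, c, 0))
    - lift (monom4 (a, b + 2, c, 0)) - lift (monom4 (a, b, c + 2, 0))"
proof (rule ext)
  fix x
  obtain y1 y2 y3 y4 where y: "invstereo x = (y1, y2, y3, y4)"
    by (metis prod_cases4)
  let ?m = "sqrt (2 / (sqn3 x + 1)) * (y1^a * y2^b * y3^c)"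
  have "y4^2 = 1 - y1^2 - y2^2 - y3^2"
    using invstereo_in_S3[of x] by (simp add: y S3_def)
  then have "lift (monom4 (a, b, c, 2)) x = ?m * (1 - y1^2 - y2^2 - y3^2)"
    by (simp add: lift_def y)
  also have "\<dots> = (lift (monom4 (a, b, c, 0)) - lift (monom4 (a + 2, b, c, 0))
      - lift (monom4 (a, b + 2, c, 0)) - lift (monom4 (a, b, c + 2, 0))) x"
    by (simp add: lift_def y power_add algebra_simps power2_eq_square)
  finally show "lift (monom4 (a, b, c, 2)) x = (lift (monom4 (a, b, c, 0)) - lift (monom4 (a + 2, b, c, 0))
      - lift (monom4 (a, b + 2, c, 0)) - lift (monom4 (a, b, c + 2, 0))) x" .
qed

lemma lift_coord_mult_monom4_in_span:
  assumes "i < 4" "\<beta> \<in> reduced_exps n"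
  shows "lift (\<lambda>y. coord i y * monom4 \<beta> y) \<in> span (lifted_monoms (Suc n))"
proof -
  obtain a b c e where \<beta>: "\<beta> = (a, b, c, e)" "e \<le> 1" "a + b + c + e \<le> n"
    using assms(2) by (auto simp: reduced_exps_def)
  show ?thesis
  proof (cases "i = 3 \<and> e = 1")
    case True
    then have "lift (\<lambda>y. coord i y * monom4 \<beta> y) = lift (monom4 (a, b, c, 2))"
      by (simp add: \<beta> coord_mult_monom4 numeral_2_eq_2)
    also have "\<dots> \<in> span (lifted_monoms (Suc n))"
      unfolding lift_monom4_y4_square
      by (intro span_diff lift_monom4_in_span) (use \<beta> True in \<open>auto simp: reduced_exps_def\<close>)
    finally show ?thesis .
  next
    case False
    then show ?thesis
      using assms(1) \<beta> by (auto simp: coord_mult_monom4 reduced_exps_def intro!: lift_monom4_in_span)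
  qed
qed

lemma lift_coord_mult_in_span:
  assumes "i < 4" "lift f \<in> span (lifted_monoms n)"
  shows "lift (\<lambda>y. coord i y * f y) \<in> span (lifted_monoms (Suc n))"
proof -
  define M where "M g = (\<lambda>x. coord i (invstereo x) * g x)" for g :: "pt3 \<Rightarrow> real"
  have "M g \<in> span (lifted_monoms (Suc n))" if "g \<in> span (lifted_monoms n)" for g
    using that
  proof (induction rule: span_induct_alt)
    case base
    then show ?case
      by (simp add: M_def span_zero zero_fun_def[symmetric])
  next
    case (step c g' h)
    then obtain \<beta> where \<beta>: "\<beta> \<in> reduced_exps n" "g' = lift (monom4 \<beta>)"
      by (auto simp: lifted_monoms_def)
    have "M g' = lift (\<lambda>y. coord i y * monom4 \<beta> y)"
      by (simp add: M_def \<beta>(2) lift_def fun_eq_iff)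
    then have "M g' \<in> span (lifted_monoms (Suc n))"
      using lift_coord_mult_monom4_in_span[OF assms(1) \<beta>(1)] by simp
    moreover have "M (c *\<^sub>R g' + h) = c *\<^sub>R M g' + M h"
      by (simp add: M_def fun_eq_iff algebra_simps)
    ultimately show ?case
      using step.IH by (metis span_add span_scale)
  qed
  moreover have "lift (\<lambda>y. coord i y * f y) = M (lift f)"
    by (simp add: M_def lift_def fun_eq_iff algebra_simps)
  ultimately show ?thesis
    using assms(2) by simp
qed

lemma lift_poly4_in_span: "poly4 n P \<Longrightarrow> n \<le> N \<Longrightarrow> lift P \<in> span (lifted_monoms N)"
proof (induction n P arbitrary: N rule: poly4.induct)
  case (poly4_const n c)
  have "lift (\<lambda>_. c) = c *\<^sub>R lift (monom4 (0, 0, 0, 0))"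
    by (simp add: lift_def fun_eq_iff monom4_eq_coords)
  moreover have "(0, 0, 0, 0) \<in> reduced_exps N"
    by (simp add: reduced_exps_def)
  ultimately show ?case
    by (metis lift_monom4_in_span span_scale)
next
  case (poly4_coord_mult i n f)
  then have "lift (\<lambda>y. coord i y * f y) \<in> span (lifted_monoms (Suc n))"
    by (intro lift_coord_mult_in_span) auto
  then show ?case
    using span_mono[OF lifted_monoms_mono[OF poly4_coord_mult.prems]] by blast
next
  case (poly4_add n f g)
  then show ?case
    unfolding lift_add by (intro span_add) auto
next
  case (poly4_scale n f c)
  then show ?case
    unfolding lift_scale by (intro span_scale) auto
qed simp

section \<open>The space \<open>H\<^sub>N\<close>\<close>

definition mon3 :: "nat \<times> nat \<times> nat \<Rightarrow> pt3 \<Rightarrow> real" where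
  "mon3 \<beta> x = (case \<beta> of (a, b, d) \<Rightarrow> case x of (x1, x2, x3) \<Rightarrow> x1^a * x2^b * x3^d)"

definition exps3 :: "nat \<Rightarrow> (nat \<times> nat \<times> nat) set" where
  "exps3 k = {(a, b, d). a + b + d \<le> k}"

lemma finite_exps3: "finite (exps3 k)"
proof -
  have "exps3 k \<subseteq> {..k} \<times> {..k} \<times> {..k}"
    by (auto simp: exps3_def)
  then show ?thesis
    by (rule finite_subset) auto
qed

lemma mpoly3_eq_sum: "mpoly3 k c x = (\<Sum>\<beta>\<in>exps3 k. c \<beta> * mon3 \<beta> x)"
  unfolding mpoly3_def exps3_def mon3_def by (cases x) (simp add: split_def mult.assoc)

lemma subspace_HN: "subspace (HN N)"
  unfolding subspace_def
proof (intro conjI ballI allI)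
  show "0 \<in> HN N"
    unfolding HN_def by (auto intro!: exI[of _ "\<lambda>_ _. 0"] simp: mpoly3_eq_sum)
next
  fix f g assume "f \<in> HN N" "g \<in> HN N"
  then obtain p q where
    "\<forall>x. f x = (\<Sum>k\<le>N. mpoly3 k (p k) x / (sqn3 x + 1) powr (real k + 1/2))"
    "\<forall>x. g x = (\<Sum>k\<le>N. mpoly3 k (q k) x / (sqn3 x + 1) powr (real k + 1/2))"
    unfolding HN_def by blast
  then show "f + g \<in> HN N"
    unfolding HN_def
    by (auto intro!: exI[of _ "\<lambda>k \<beta>. p k \<beta> + q k \<beta>"]
        simp: mpoly3_eq_sum sum.distrib distrib_right add_divide_distrib)
next
  fix c :: real and f assume "f \<in> HN N"
  then obtain p where "\<forall>x. f x = (\<Sum>k\<le>N. mpoly3 k (p k) x / (sqn3 x + 1) powr (real k + 1/2))"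
    unfolding HN_def by blast
  then show "c *\<^sub>R f \<in> HN N"
    unfolding HN_def
    by (auto intro!: exI[of _ "\<lambda>k \<beta>. c * p k \<beta>"] simp: mpoly3_eq_sum sum_distrib_left mult.assoc)
qed

lemma scaled_mon3_in_HN:
  assumes "\<beta> \<in> exps3 k" "k \<le> N"
  shows "(\<lambda>x. C * mon3 \<beta> x / (sqn3 x + 1) powr (real k + 1/2)) \<in> HN N"
proof -
  define p where "p j \<gamma> = (if j = k \<and> \<gamma> = \<beta> then C else 0)" for j \<gamma>
  have "mpoly3 j (p j) x = (if j = k then C * mon3 \<beta> x else 0)" for j x
    using assms(1) finite_exps3[of k]
    by (simp add: p_def mpoly3_eq_sum if_distrib[of "\<lambda>z. z * _"] sum.delta cong: if_cong)
  then have "(\<Sum>j\<le>N. mpoly3 j (p j) x / (sqn3 x + 1) powr (real j + 1/2))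
      = C * mon3 \<beta> x / (sqn3 x + 1) powr (real k + 1/2)" for x
    using assms(2) by (simp add: if_distrib[of "\<lambda>z. z / _"] sum.delta cong: if_cong)
  then show ?thesis
    unfolding HN_def by (intro CollectI exI[of _ p]) simp
qed

lemma powr_nat_add_half: "0 < Q \<Longrightarrow> Q powr (real k + 1/2) = Q ^ k * sqrt Q"
  by (simp add: powr_add powr_realpow powr_half_sqrt)

text \<open>Pulled back by \<open>invstereo\<close>, the coordinate \<open>y\<^sub>i\<close> becomes \<open>2 x\<^sub>i / (|x|\<^sup>2 + 1)\<close> and
  \<open>(1 - y\<^sub>4) / 2\<close> becomes \<open>1 / (|x|\<^sup>2 + 1)\<close>.\<close>

definition stereo_monom :: "nat \<times> nat \<times> nat \<Rightarrow> nat \<Rightarrow> pt4 \<Rightarrow> real" where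
  "stereo_monom \<beta> r y = (case \<beta> of (a, b, d) \<Rightarrow>
     coord 0 y ^ a * coord 1 y ^ b * coord 2 y ^ d * ((1 - coord 3 y) / 2) ^ r)"

lemma lift_stereo_monom:
  "lift (stereo_monom (a, b, d) r) =
    (\<lambda>x. sqrt 2 * 2 ^ (a + b + d) * mon3 (a, b, d) x / (sqn3 x + 1) powr (real (a + b + d + r) + 1/2))"
proof (rule fun_eq3)
  fix x1 x2 x3 :: real
  define Q where "Q = x1^2 + x2^2 + x3^2 + 1"
  have Q: "0 < Q"
    unfolding Q_def by (simp add: add_nonneg_pos)
  have "(1 - (x1^2 + x2^2 + x3^2 - 1) / Q) / 2 = 1 / Q"
    using Q by (simp add: Q_def field_simps)
  then have "lift (stereo_monom (a, b, d) r) (x1, x2, x3)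
      = sqrt 2 / sqrt Q * ((2 * x1 / Q)^a * (2 * x2 / Q)^b * (2 * x3 / Q)^d * (1 / Q)^r)"
    by (simp add: lift_def invstereo_simp Let_def Q_def[symmetric] real_sqrt_divide stereo_monom_def coord_def)
  also have "\<dots> = sqrt 2 * 2 ^ (a + b + d) * (x1^a * x2^b * x3^d) / (Q ^ (a + b + d + r) * sqrt Q)"
    using Q by (simp add: power_divide power_mult_distrib power_add field_simps)
  also have "\<dots> = sqrt 2 * 2 ^ (a + b + d) * mon3 (a, b, d) (x1, x2, x3)
      / (sqn3 (x1, x2, x3) + 1) powr (real (a + b + d + r) + 1/2)"
    unfolding powr_nat_add_half[OF Q, symmetric] by (simp add: mon3_def Q_def)
  finally show "lift (stereo_monom (a, b, d) r) (x1, x2, x3) = sqrt 2 * 2 ^ (a + b + d) * mon3 (a, b, d) (x1, x2, x3)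
      / (sqn3 (x1, x2, x3) + 1) powr (real (a + b + d + r) + 1/2)" .
qed

lemma poly4_stereo_monom: "poly4 (a + b + d + r) (stereo_monom (a, b, d) r)"
proof -
  have "poly4 1 (\<lambda>y. (1 - coord 3 y) / 2)"
    using poly4_scale[OF poly4_diff[OF poly4_const poly4_coord[of 3]], of "1/2" 1] by simp
  then have "poly4 (1 * a + 1 * b + 1 * d + 1 * r) (stereo_monom (a, b, d) r)"
    unfolding stereo_monom_def prod.case by (intro poly4_mult poly4_power poly4_coord) auto
  then show ?thesis
    by simp
qed

lemma lift_stereo_monom_in_HN: "a + b + d + r \<le> N \<Longrightarrow> lift (stereo_monom (a, b, d) r) \<in> HN N"
  unfolding lift_stereo_monom by (rule scaled_mon3_in_HN) (auto simp: exps3_def)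

lemma lifted_monoms_subset_HN: "lifted_monoms N \<subseteq> HN N"
proof
  fix f assume "f \<in> lifted_monoms N"
  then obtain a b c e where abce: "e \<le> 1" "a + b + c + e \<le> N" "f = lift (monom4 (a, b, c, e))"
    by (auto simp: lifted_monoms_def reduced_exps_def)
  have monom0: "monom4 (a, b, c, 0) = stereo_monom (a, b, c) 0"
    by (simp add: fun_eq_iff monom4_eq_coords stereo_monom_def)
  have "lift (monom4 (a, b, c, 0)) \<in> HN N"
    unfolding monom0 using abce by (intro lift_stereo_monom_in_HN) simp
  moreover have "lift (monom4 (a, b, c, 1)) \<in> HN N" if "e = 1"
  proof -
    have "monom4 (a, b, c, 1) = (\<lambda>y. stereo_monom (a, b, c) 0 y - 2 * stereo_monom (a, b, c) 1 y)"
      by (simp add: fun_eq_iff monom4_eq_coords stereo_monom_def field_simps)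
    then have "lift (monom4 (a, b, c, 1)) = lift (stereo_monom (a, b, c) 0) - 2 *\<^sub>R lift (stereo_monom (a, b, c) 1)"
      by (simp add: lift_diff lift_scale)
    then show ?thesis
      using abce that subspace_HN
      by (simp add: subspace_diff subspace_scale lift_stereo_monom_in_HN)
  qed
  ultimately show "f \<in> HN N"
    using abce by (cases e) auto
qed

lemma HN_subset_span: "HN N \<subseteq> span (lifted_monoms N)"
proof
  fix v assume "v \<in> HN N"
  then obtain p where p: "\<forall>x. v x = (\<Sum>k\<le>N. mpoly3 k (p k) x / (sqn3 x + 1) powr (real k + 1/2))"
    unfolding HN_def by blast
  define g where "g k \<beta> = (case \<beta> of (a, b, d) \<Rightarrow>
      (p k \<beta> / (sqrt 2 * 2 ^ (a + b + d))) *\<^sub>R lift (stereo_monom \<beta> (k - (a + b + d))))" for k \<beta>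
  have "v = (\<Sum>k\<le>N. \<Sum>\<beta>\<in>exps3 k. g k \<beta>)"
  proof (rule ext)
    fix x
    have "mpoly3 k (p k) x / (sqn3 x + 1) powr (real k + 1/2) = (\<Sum>\<beta>\<in>exps3 k. g k \<beta> x)" for k
      unfolding mpoly3_eq_sum sum_divide_distrib
      by (rule sum.cong) (auto simp: exps3_def g_def lift_stereo_monom)
    then show "v x = (\<Sum>k\<le>N. \<Sum>\<beta>\<in>exps3 k. g k \<beta>) x"
      by (simp add: p sum_fun_apply)
  qed
  also have "\<dots> \<in> span (lifted_monoms N)"
  proof (intro span_sum)
    fix k \<beta> assume "k \<in> {..N}" "\<beta> \<in> exps3 k"
    then obtain a b d where "\<beta> = (a, b, d)" "a + b + d \<le> k" "k \<le> N"
      by (auto simp: exps3_def)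
    then show "g k \<beta> \<in> span (lifted_monoms N)"
      unfolding g_def using poly4_stereo_monom[of a b d "k - (a + b + d)"]
      by (auto intro!: span_scale lift_poly4_in_span)
  qed
  finally show "v \<in> span (lifted_monoms N)" .
qed

lemma HN_eq_span: "HN N = span (lifted_monoms N)"
  using HN_subset_span span_minimal[OF lifted_monoms_subset_HN subspace_HN] by blast

section \<open>The functions \<open>\<Y>\<^sub>\<alpha>\<close> as polynomials\<close>

lemma LambdaStar_eq: "LambdaStar N = {(k, l, m). l \<le> k \<and> k \<le> N \<and> - int l \<le> m \<and> m \<le> int l}"
  by (auto simp: LambdaStar_def Lambda_k_def Lambda_def)

definition cheb_deriv :: "nat \<Rightarrow> nat \<Rightarrow> real poly" where
  "cheb_deriv k l = (pderiv ^^ (l + 1)) (cheb (k + 1))"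

definition rodrigues :: "nat \<Rightarrow> nat \<Rightarrow> real poly" where
  "rodrigues l \<mu> = (pderiv ^^ (l + \<mu>)) ([:-1, 0, 1:] ^ l)"

definition Yang_coeff :: "nat \<Rightarrow> nat \<Rightarrow> nat \<Rightarrow> real" where
  "Yang_coeff k l \<mu> = acoef k l powr (-1/2) * sqrt ((2 * real l + 1) / (2 * pi)) *
     ((-1)^\<mu> * sqrt (fact (l - \<mu>) / fact (l + \<mu>))) * ((-1)^\<mu> / (2^l * fact l))"

lemma cheb_deriv_degree: "degree (cheb_deriv k l) = k - l"
  unfolding cheb_deriv_def degree_higher_pderiv cheb_degree by simp

lemma cheb_deriv_neq_0: "l \<le> k \<Longrightarrow> cheb_deriv k l \<noteq> 0"
  unfolding cheb_deriv_def by (rule higher_pderiv_neq_0) (simp_all add: cheb_neq_0 cheb_degree)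

lemma rodrigues_degree: "degree (rodrigues l \<mu>) = l - \<mu>"
  by (simp add: rodrigues_def degree_higher_pderiv degree_power_eq)

lemma rodrigues_neq_0: "\<mu> \<le> l \<Longrightarrow> rodrigues l \<mu> \<noteq> 0"
  unfolding rodrigues_def by (rule higher_pderiv_neq_0) (auto simp: degree_power_eq)

lemma has_parity_rodrigues: "has_parity (l + \<mu>) (rodrigues l \<mu>)"
  unfolding rodrigues_def
  by (intro has_parity_higher_pderiv has_parity_power) (auto simp: has_parity_def coeff_pCons split: nat.splits)

lemma Yang_coeff_neq_0: "Yang_coeff k l \<mu> \<noteq> 0"
  by (simp add: Yang_coeff_def acoef_def)

lemma Yang_factor:
  assumes "0 \<le> \<theta>" "\<theta> \<le> pi"
  shows "Yang (k, l, m) \<phi> \<theta> \<chi> = Yang_coeff k l (nat \<bar>m\<bar>) * (sin \<chi> ^ l * poly (cheb_deriv k l) (cos \<chi>)) *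
     (sin \<theta> ^ nat \<bar>m\<bar> * poly (rodrigues l (nat \<bar>m\<bar>)) (cos \<theta>)) * ytrig m \<phi>"
proof -
  have "sqrt (1 - cos \<theta> ^ 2) = sin \<theta>"
    using sin_ge_zero[OF assms] by (simp add: sin_squared_eq[symmetric])
  then show ?thesis
    by (simp add: Yang_def Ysph_def assocK_def assocP_def rodrigues_def Yang_coeff_def
        cheb_deriv_def chebD_def algebra_simps)
qed

lemma coord_sph3 [simp]:
  "coord 0 (sph3 \<phi> \<theta> \<chi>) = sin \<theta> * cos \<phi> * sin \<chi>"
  "coord 1 (sph3 \<phi> \<theta> \<chi>) = sin \<theta> * sin \<phi> * sin \<chi>"
  "coord 2 (sph3 \<phi> \<theta> \<chi>) = cos \<theta> * sin \<chi>"
  "coord 3 (sph3 \<phi> \<theta> \<chi>) = cos \<chi>"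
  "coord (Suc 0) (sph3 \<phi> \<theta> \<chi>) = sin \<theta> * sin \<phi> * sin \<chi>"
  by (simp_all add: coord_def sph3_def)

text \<open>At \<open>sph3 \<phi> \<theta> \<chi>\<close>, \<open>sin \<chi> ^ n * cos \<theta> ^ j = y\<^sub>3 ^ j * (1 - y\<^sub>4\<^sup>2) ^ ((n - j) div 2)\<close> whenever
  \<open>n - j\<close> is even, and the parity of \<open>D\<close> rules out the other \<open>j\<close>.\<close>

lemma poly4_sin_power_poly_cos:
  assumes parity: "has_parity n D" and deg: "degree D \<le> n"
  shows "\<exists>P. poly4 n P \<and> (\<forall>\<phi> \<theta> \<chi>. P (sph3 \<phi> \<theta> \<chi>) = sin \<chi> ^ n * poly D (cos \<theta>))"
proof -
  define P where "P y = (\<Sum>j\<le>n. coeff D j * (coord 2 y ^ j * (1 - coord 3 y ^ 2) ^ ((n - j) div 2)))" for y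
  have "poly4 2 (\<lambda>y. 1 - coord 3 y ^ 2)"
    using poly4_diff[OF poly4_const poly4_power[OF poly4_coord[of 3], of 2]] by simp
  then have "poly4 (1 * j + 2 * ((n - j) div 2)) (\<lambda>y. coord 2 y ^ j * (1 - coord 3 y ^ 2) ^ ((n - j) div 2))" for j
    by (intro poly4_mult poly4_power poly4_coord) simp_all
  then have "poly4 n (\<lambda>y. coord 2 y ^ j * (1 - coord 3 y ^ 2) ^ ((n - j) div 2))" if "j \<le> n" for j
    by (rule poly4_mono) (use that in auto)
  then have "poly4 n P"
    unfolding P_def by (intro poly4_sum poly4_scale) auto
  moreover have "P (sph3 \<phi> \<theta> \<chi>) = sin \<chi> ^ n * poly D (cos \<theta>)" for \<phi> \<theta> \<chi>
  proof -
    have "coeff D j * (coord 2 (sph3 \<phi> \<theta> \<chi>) ^ j * (1 - coord 3 (sph3 \<phi> \<theta> \<chi>) ^ 2) ^ ((n - j) div 2))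
        = sin \<chi> ^ n * (coeff D j * cos \<theta> ^ j)" if "j \<le> n" for j
    proof (cases "even (n - j)")
      case True
      then have "(1 - cos \<chi> ^ 2) ^ ((n - j) div 2) = sin \<chi> ^ (n - j)"
        by (simp add: sin_squared_eq[symmetric] power_mult[symmetric])
      moreover have "sin \<chi> ^ j * sin \<chi> ^ (n - j) = sin \<chi> ^ n"
        using that by (simp add: power_add[symmetric])
      ultimately show ?thesis
        by (simp add: power_mult_distrib algebra_simps)
    next
      case False
      then have "coeff D j = 0"
        using parity that by (auto simp: has_parity_def even_diff_nat)
      then show ?thesis
        by simp
    qed
    then have "P (sph3 \<phi> \<theta> \<chi>) = (\<Sum>j\<le>n. sin \<chi> ^ n * (coeff D j * cos \<theta> ^ j))"
      unfolding P_def by (intro sum.cong) auto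
    also have "\<dots> = sin \<chi> ^ n * (\<Sum>j\<le>n. coeff D j * cos \<theta> ^ j)"
      by (simp add: sum_distrib_left)
    also have "(\<Sum>j\<le>n. coeff D j * cos \<theta> ^ j) = poly D (cos \<theta>)"
      unfolding poly_altdef using deg by (intro sum.mono_neutral_right) (auto simp: coeff_eq_0)
    finally show ?thesis .
  qed
  ultimately show ?thesis
    by blast
qed

lemma poly4_Re_Im_power:
  "poly4 n (\<lambda>y. Re (Complex (coord 0 y) (coord 1 y) ^ n)) \<and>
   poly4 n (\<lambda>y. Im (Complex (coord 0 y) (coord 1 y) ^ n))"
proof (induction n)
  case 0
  then show ?case
    using poly4_const[of 0 1] poly4_const[of 0 0] by simp
next
  case (Suc n)
  let ?z = "\<lambda>y. Complex (coord 0 y) (coord 1 y) ^ n"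
  have "poly4 (Suc n) (\<lambda>y. coord 0 y * Re (?z y))" "poly4 (Suc n) (\<lambda>y. coord 1 y * Im (?z y))"
    "poly4 (Suc n) (\<lambda>y. coord 0 y * Im (?z y))" "poly4 (Suc n) (\<lambda>y. coord 1 y * Re (?z y))"
    using Suc by (auto intro: poly4_coord_mult)
  from poly4_diff[OF this(1,2)] poly4_add[OF this(3,4)] show ?case
    by simp
qed

lemma poly4_ytrig:
  "\<exists>P. poly4 (nat \<bar>m\<bar>) P \<and> (\<forall>\<phi> \<theta> \<chi>. P (sph3 \<phi> \<theta> \<chi>) = (sin \<theta> * sin \<chi>) ^ nat \<bar>m\<bar> * ytrig m \<phi>)"
proof -
  define \<mu> where "\<mu> = nat \<bar>m\<bar>"
  define Z where "Z y = Complex (coord 0 y) (coord 1 y) ^ \<mu>" for y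
  have Z: "Z (sph3 \<phi> \<theta> \<chi>) = complex_of_real ((sin \<theta> * sin \<chi>) ^ \<mu>) * cis (real \<mu> * \<phi>)" for \<phi> \<theta> \<chi>
  proof -
    have "Complex (coord 0 (sph3 \<phi> \<theta> \<chi>)) (coord 1 (sph3 \<phi> \<theta> \<chi>)) = complex_of_real (sin \<theta> * sin \<chi>) * cis \<phi>"
      by (simp add: complex_eq_iff)
    then show ?thesis
      by (simp add: Z_def power_mult_distrib DeMoivre)
  qed
  have Re: "poly4 \<mu> (\<lambda>y. Re (Z y))" and Im: "poly4 \<mu> (\<lambda>y. Im (Z y))"
    using poly4_Re_Im_power[of \<mu>] by (auto simp: Z_def)
  have \<mu>: "real \<mu> = real_of_int \<bar>m\<bar>"
    by (simp add: \<mu>_def)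
  consider "1 \<le> m" | "m = 0" | "m < 0"
    by linarith
  then have "\<exists>P. poly4 \<mu> P \<and> (\<forall>\<phi> \<theta> \<chi>. P (sph3 \<phi> \<theta> \<chi>) = (sin \<theta> * sin \<chi>) ^ \<mu> * ytrig m \<phi>)"
  proof cases
    case 1
    then show ?thesis
      using Re \<mu>
      by (intro exI[of _ "\<lambda>y. Re (Z y)"]) (auto simp: Z ytrig_def)
  next
    case 2
    then show ?thesis
      by (intro exI[of _ "\<lambda>y. 1 / sqrt 2"]) (auto simp: ytrig_def \<mu>_def intro: poly4_const)
  next
    case 3
    then show ?thesis
      using Im \<mu>
      by (intro exI[of _ "\<lambda>y. Im (Z y)"]) (auto simp: Z ytrig_def)
  qed
  then show ?thesis
    unfolding \<mu>_def .
qed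

lemma Yang_eq_poly4:
  assumes "l \<le> k" "nat \<bar>m\<bar> \<le> l"
  shows "\<exists>P. poly4 k P \<and> (\<forall>\<phi> \<theta> \<chi>. 0 \<le> \<theta> \<longrightarrow> \<theta> \<le> pi \<longrightarrow> Yang (k, l, m) \<phi> \<theta> \<chi> = P (sph3 \<phi> \<theta> \<chi>))"
proof -
  define \<mu> where "\<mu> = nat \<bar>m\<bar>"
  define n where "n = l - \<mu>"
  have P1: "poly4 (k - l) (\<lambda>y. poly (cheb_deriv k l) (coord 3 y))"
    using poly4_poly[OF poly4_coord[of 3], of "cheb_deriv k l"] by (simp add: cheb_deriv_degree)
  have "has_parity n (rodrigues l \<mu>)"
    using has_parity_rodrigues[of l \<mu>] assms(2) by (auto simp: has_parity_def n_def \<mu>_def)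
  moreover have "degree (rodrigues l \<mu>) \<le> n"
    by (simp add: rodrigues_degree n_def)
  ultimately obtain P2 where P2: "poly4 n P2"
    "\<And>\<phi> \<theta> \<chi>. P2 (sph3 \<phi> \<theta> \<chi>) = sin \<chi> ^ n * poly (rodrigues l \<mu>) (cos \<theta>)"
    using poly4_sin_power_poly_cos by blast
  obtain P3 where P3: "poly4 \<mu> P3" "\<And>\<phi> \<theta> \<chi>. P3 (sph3 \<phi> \<theta> \<chi>) = (sin \<theta> * sin \<chi>) ^ \<mu> * ytrig m \<phi>"
    using poly4_ytrig[of m] unfolding \<mu>_def by blast
  define P where "P y = Yang_coeff k l \<mu> * (poly (cheb_deriv k l) (coord 3 y) * (P2 y * P3 y))" for y
  have "poly4 ((k - l) + (n + \<mu>)) (\<lambda>y. poly (cheb_deriv k l) (coord 3 y) * (P2 y * P3 y))"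
    by (intro poly4_mult P1 P2 P3)
  moreover have "(k - l) + (n + \<mu>) = k"
    using assms by (simp add: n_def \<mu>_def)
  ultimately have "poly4 k P"
    unfolding P_def using poly4_scale by simp
  moreover have "Yang (k, l, m) \<phi> \<theta> \<chi> = P (sph3 \<phi> \<theta> \<chi>)" if "0 \<le> \<theta>" "\<theta> \<le> pi" for \<phi> \<theta> \<chi>
  proof -
    have "sin \<chi> ^ l = sin \<chi> ^ n * sin \<chi> ^ \<mu>"
      using assms(2) by (simp add: n_def \<mu>_def power_add[symmetric])
    then show ?thesis
      unfolding Yang_factor[OF that] P_def P2 P3 \<mu>_def[symmetric]
      by (simp add: power_mult_distrib algebra_simps)
  qed
  ultimately show ?thesis
    by blast
qed

text \<open>\<open>Ycal\<close> evaluates \<open>Yang\<close> at angles chosen by \<open>SOME\<close>; the choice is harmless as soon as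
  \<open>Yang\<close> is a function of the point \<open>sph3 \<phi> \<theta> \<chi>\<close>.\<close>

lemma Ycal_eq_on_S3:
  assumes P: "\<And>\<phi> \<theta> \<chi>. 0 \<le> \<theta> \<Longrightarrow> \<theta> \<le> pi \<Longrightarrow> Yang \<alpha> \<phi> \<theta> \<chi> = P (sph3 \<phi> \<theta> \<chi>)"
    and y: "y \<in> S3"
  shows "Ycal \<alpha> y = P y"
proof -
  let ?Q = "\<lambda>a. angle_ok a \<and> y = (case a of (\<phi>, \<theta>, \<chi>) \<Rightarrow> sph3 \<phi> \<theta> \<chi>)"
  have "?Q (SOME a. ?Q a)"
    using S3_angles[OF y] by (rule someI_ex)
  moreover obtain \<phi> \<theta> \<chi> where a: "(SOME a. ?Q a) = (\<phi>, \<theta>, \<chi>)"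
    by (metis prod_cases3)
  ultimately have ok: "angle_ok (\<phi>, \<theta>, \<chi>)" "y = sph3 \<phi> \<theta> \<chi>"
    by auto
  have "Ycal \<alpha> y = Yang \<alpha> \<phi> \<theta> \<chi>"
    unfolding Ycal_def a by simp
  also have "\<dots> = P y"
    using P ok by (simp add: angle_ok_def)
  finally show ?thesis .
qed

lemma Ycal_poly4:
  assumes "\<alpha> \<in> LambdaStar N"
  obtains P where "poly4 N P" "\<And>y. y \<in> S3 \<Longrightarrow> Ycal \<alpha> y = P y"
    "\<And>\<phi> \<theta> \<chi>. 0 \<le> \<theta> \<Longrightarrow> \<theta> \<le> pi \<Longrightarrow> Yang \<alpha> \<phi> \<theta> \<chi> = P (sph3 \<phi> \<theta> \<chi>)"
proof -
  obtain k l m where \<alpha>: "\<alpha> = (k, l, m)" "l \<le> k" "k \<le> N" "nat \<bar>m\<bar> \<le> l"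
    using assms by (auto simp: LambdaStar_eq)
  then obtain P where "poly4 k P" "\<And>\<phi> \<theta> \<chi>. 0 \<le> \<theta> \<Longrightarrow> \<theta> \<le> pi \<Longrightarrow> Yang \<alpha> \<phi> \<theta> \<chi> = P (sph3 \<phi> \<theta> \<chi>)"
    using Yang_eq_poly4 by blast
  then show ?thesis
    using that \<alpha>(3) poly4_mono Ycal_eq_on_S3 by blast
qed

lemma lift_cong_S3: "(\<And>y. y \<in> S3 \<Longrightarrow> P y = Q y) \<Longrightarrow> lift P = lift Q"
  by (simp add: lift_def fun_eq_iff invstereo_in_S3)

lemma Wfun_in_span: "\<alpha> \<in> LambdaStar N \<Longrightarrow> Wfun \<alpha> \<in> span (lifted_monoms N)"
proof -
  assume "\<alpha> \<in> LambdaStar N"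
  then obtain P where P: "poly4 N P" "\<And>y. y \<in> S3 \<Longrightarrow> Ycal \<alpha> y = P y"
    using Ycal_poly4 by metis
  have "Wfun \<alpha> = lift (Ycal \<alpha>)"
    by (simp add: Wfun_def lift_def fun_eq_iff)
  also have "\<dots> = lift P"
    using P(2) by (rule lift_cong_S3)
  finally show ?thesis
    using lift_poly4_in_span[OF P(1)] by simp
qed

lemma Ycal_sph3:
  assumes "\<alpha> \<in> LambdaStar N" "0 \<le> \<theta>" "\<theta> \<le> pi"
  shows "Ycal \<alpha> (sph3 \<phi> \<theta> \<chi>) = Yang \<alpha> \<phi> \<theta> \<chi>"
proof -
  obtain P where "\<And>y. y \<in> S3 \<Longrightarrow> Ycal \<alpha> y = P y"
    "\<And>\<phi> \<theta> \<chi>. 0 \<le> \<theta> \<Longrightarrow> \<theta> \<le> pi \<Longrightarrow> Yang \<alpha> \<phi> \<theta> \<chi> = P (sph3 \<phi> \<theta> \<chi>)"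
    using Ycal_poly4[OF assms(1)] by metis
  then show ?thesis
    using assms(2,3) sph3_in_S3 by simp
qed

section \<open>Linear independence\<close>

lemma LambdaStar_sum:
  "(\<Sum>\<alpha>\<in>LambdaStar N. f \<alpha>) = (\<Sum>m\<in>{-int N..int N}. \<Sum>l\<in>{nat \<bar>m\<bar>..N}. \<Sum>k\<in>{l..N}. f (k, l, m))"
proof -
  define S where "S = (SIGMA m:{-int N..int N}. SIGMA l:{nat \<bar>m\<bar>..N}. {l..N})"
  define g where "g = (\<lambda>(m::int, l::nat, k::nat). (k, l, m))"
  have inj: "inj_on g S"
    by (auto simp: inj_on_def g_def)
  have "LambdaStar N \<subseteq> g ` S"
  proof
    fix \<alpha> assume "\<alpha> \<in> LambdaStar N"
    then obtain k l m where "\<alpha> = (k, l, m)" "(m, l, k) \<in> S"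
      by (auto simp: LambdaStar_eq S_def)
    then show "\<alpha> \<in> g ` S"
      by (auto simp: g_def image_iff intro!: bexI[of _ "(m, l, k)"])
  qed
  then have "g ` S = LambdaStar N"
    by (auto simp: g_def S_def LambdaStar_eq)
  then have "(\<Sum>\<alpha>\<in>LambdaStar N. f \<alpha>) = (\<Sum>p\<in>S. f (g p))"
    using sum.reindex[OF inj, of f] by simp
  also have "\<dots> = (\<Sum>m\<in>{-int N..int N}. \<Sum>p\<in>(SIGMA l:{nat \<bar>m\<bar>..N}. {l..N}). f (g (m, p)))"
    unfolding S_def by (subst sum.Sigma) (auto simp: split_def)
  also have "\<dots> = (\<Sum>m\<in>{-int N..int N}. \<Sum>l\<in>{nat \<bar>m\<bar>..N}. \<Sum>k\<in>{l..N}. f (k, l, m))"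
    by (intro sum.cong refl, subst sum.Sigma) (auto simp: g_def split_def)
  finally show ?thesis .
qed

lemma Yang_lincomb_separated:
  assumes "0 \<le> \<theta>" "\<theta> \<le> pi"
  shows "(\<Sum>\<alpha>\<in>LambdaStar N. c \<alpha> * Yang \<alpha> \<phi> \<theta> \<chi>) =
    (\<Sum>m\<in>{-int N..int N}. (\<Sum>l\<in>{nat \<bar>m\<bar>..N}.
      (\<Sum>k\<in>{l..N}. c (k, l, m) * Yang_coeff k l (nat \<bar>m\<bar>) * (sin \<chi> ^ l * poly (cheb_deriv k l) (cos \<chi>))) *
      (sin \<theta> ^ nat \<bar>m\<bar> * poly (rodrigues l (nat \<bar>m\<bar>)) (cos \<theta>))) * ytrig m \<phi>)"
  unfolding LambdaStar_sum sum_distrib_right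
  using assms by (intro sum.cong refl) (simp add: Yang_factor)

lemma Yang_lincomb_eq_0:
  assumes zero: "\<And>\<phi> \<theta> \<chi>. 0 \<le> \<phi> \<Longrightarrow> \<phi> < 2 * pi \<Longrightarrow> 0 < \<theta> \<Longrightarrow> \<theta> < pi \<Longrightarrow> 0 < \<chi> \<Longrightarrow> \<chi> < pi \<Longrightarrow>
      (\<Sum>\<alpha>\<in>LambdaStar N. c \<alpha> * Yang \<alpha> \<phi> \<theta> \<chi>) = 0"
  shows "\<forall>\<alpha>\<in>LambdaStar N. c \<alpha> = 0"
proof -
  \<comment> \<open>Separate the variables: first \<open>\<phi>\<close>, then \<open>\<theta>\<close>, then \<open>\<chi>\<close>.\<close>
  define e where "e m l \<chi> = (\<Sum>k\<in>{l..N}. c (k, l, m) * Yang_coeff k l (nat \<bar>m\<bar>) *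
      (sin \<chi> ^ l * poly (cheb_deriv k l) (cos \<chi>)))" for m l \<chi>
  define d where "d m \<theta> \<chi> = (\<Sum>l\<in>{nat \<bar>m\<bar>..N}. e m l \<chi> *
      (sin \<theta> ^ nat \<bar>m\<bar> * poly (rodrigues l (nat \<bar>m\<bar>)) (cos \<theta>)))" for m \<theta> \<chi>
  have d_zero: "d m \<theta> \<chi> = 0"
    if m: "m \<in> {-int N..int N}" and \<theta>: "0 < \<theta>" "\<theta> < pi" and \<chi>: "0 < \<chi>" "\<chi> < pi" for m \<theta> \<chi>
  proof -
    have "(\<Sum>m\<in>{-int N..int N}. d m \<theta> \<chi> * ytrig m \<phi>) = 0" if "0 \<le> \<phi>" "\<phi> < 2 * pi" for \<phi>
      using zero[OF that \<theta> \<chi>] \<theta> by (simp add: Yang_lincomb_separated d_def e_def)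
    then show ?thesis
      using ytrig_lincomb_eq_0[of "{-int N..int N}" "\<lambda>m. d m \<theta> \<chi>"] m by simp
  qed
  have e_zero: "e m l \<chi> = 0"
    if m: "m \<in> {-int N..int N}" and l: "l \<in> {nat \<bar>m\<bar>..N}" and \<chi>: "0 < \<chi>" "\<chi> < pi" for m l \<chi>
  proof -
    have "\<forall>l\<in>{nat \<bar>m\<bar>..N}. e m l \<chi> = 0"
    proof (rule lincomb_sin_power_poly_cos_eq_0[where q = "\<lambda>l. rodrigues l (nat \<bar>m\<bar>)"])
      show "inj_on (\<lambda>l. degree (rodrigues l (nat \<bar>m\<bar>))) {nat \<bar>m\<bar>..N}"
        unfolding rodrigues_degree by (rule inj_onI) (simp add: eq_diff_iff)
      show "(\<Sum>l\<in>{nat \<bar>m\<bar>..N}. e m l \<chi> * (sin t ^ nat \<bar>m\<bar> * poly (rodrigues l (nat \<bar>m\<bar>)) (cos t))) = 0"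
        if "0 < t" "t < pi" for t
        using d_zero[OF m that \<chi>] by (simp add: d_def)
    qed (simp_all add: rodrigues_neq_0)
    then show ?thesis
      using l by blast
  qed
  show ?thesis
  proof
    fix \<alpha> assume "\<alpha> \<in> LambdaStar N"
    then obtain k l m where \<alpha>: "\<alpha> = (k, l, m)" "l \<le> k" "k \<le> N" "- int l \<le> m" "m \<le> int l"
      by (auto simp: LambdaStar_eq)
    have "\<forall>k\<in>{l..N}. c (k, l, m) * Yang_coeff k l (nat \<bar>m\<bar>) = 0"
    proof (rule lincomb_sin_power_poly_cos_eq_0[where q = "\<lambda>k. cheb_deriv k l"])
      show "inj_on (\<lambda>k. degree (cheb_deriv k l)) {l..N}"
        unfolding cheb_deriv_degree by (rule inj_onI) auto
      show "(\<Sum>k\<in>{l..N}. c (k, l, m) * Yang_coeff k l (nat \<bar>m\<bar>) * (sin t ^ l * poly (cheb_deriv k l) (cos t))) = 0"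
        if "0 < t" "t < pi" for t
        using e_zero[of m l t] \<alpha> that by (simp add: e_def)
    qed (simp_all add: cheb_deriv_neq_0)
    then have "c (k, l, m) * Yang_coeff k l (nat \<bar>m\<bar>) = 0"
      using \<alpha>(2,3) by auto
    then show "c \<alpha> = 0"
      using \<alpha>(1) Yang_coeff_neq_0 by simp
  qed
qed

lemma Wfun_lincomb_eq_0:
  assumes "(\<lambda>x. \<Sum>\<alpha>\<in>LambdaStar N. c \<alpha> * Wfun \<alpha> x) = (\<lambda>x. 0)"
  shows "\<forall>\<alpha>\<in>LambdaStar N. c \<alpha> = 0"
proof (rule Yang_lincomb_eq_0)
  fix \<phi> \<theta> \<chi> :: real assume angles: "0 < \<theta>" "\<theta> < pi" "0 < \<chi>" "\<chi> < pi"
  obtain y1 y2 y3 y4 where y: "sph3 \<phi> \<theta> \<chi> = (y1, y2, y3, y4)"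
    by (metis prod_cases4)
  have "y4 \<noteq> 1"
    using y cos_monotone_0_pi[of 0 \<chi>] angles(3,4) by (simp add: sph3_def)
  then obtain x where x: "invstereo x = sph3 \<phi> \<theta> \<chi>"
    using invstereo_onto sph3_in_S3[of \<phi> \<theta> \<chi>] unfolding y by blast
  have "0 = (\<Sum>\<alpha>\<in>LambdaStar N. c \<alpha> * Wfun \<alpha> x)"
    using fun_cong[OF assms, of x] by simp
  also have "\<dots> = sqrt (2 / (sqn3 x + 1)) * (\<Sum>\<alpha>\<in>LambdaStar N. c \<alpha> * Yang \<alpha> \<phi> \<theta> \<chi>)"
    unfolding sum_distrib_left using angles
    by (intro sum.cong refl) (simp add: Wfun_def x Ycal_sph3)
  finally show "(\<Sum>\<alpha>\<in>LambdaStar N. c \<alpha> * Yang \<alpha> \<phi> \<theta> \<chi>) = 0"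
    using sqn3_nonneg[of x] by simp
qed

lemma finite_LambdaStar: "finite (LambdaStar N)"
proof -
  have "LambdaStar N \<subseteq> {..N} \<times> {..N} \<times> {-int N..int N}"
    by (auto simp: LambdaStar_eq)
  then show ?thesis
    by (rule finite_subset) auto
qed

lemma card_lifted_monoms_le: "card (lifted_monoms N) \<le> card (LambdaStar N)"
proof -
  define g where "g = (\<lambda>(a::nat, b::nat, c::nat, e::nat).
      (a + b + c + e, b + c + e, if e = 0 then int b else - int b - 1))"
  have "inj_on g (reduced_exps N)"
    unfolding inj_on_def g_def reduced_exps_def by (auto split: if_splits)
  moreover have "g ` reduced_exps N \<subseteq> LambdaStar N"
    unfolding g_def reduced_exps_def LambdaStar_eq by (auto split: if_splits)
  ultimately have "card (reduced_exps N) \<le> card (LambdaStar N)"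
    using card_inj_on_le finite_LambdaStar by blast
  then show ?thesis
    unfolding lifted_monoms_def using card_image_le[OF finite_reduced_exps] le_trans by blast
qed

theorem lemma4p1:
  fixes N :: nat
  assumes "N \<ge> 1"
  shows "family_basis (HN N) (LambdaStar N) Wfun"
proof (rule family_basis_if_independent[OF finite_LambdaStar finite_lifted_monoms card_lifted_monoms_le HN_eq_span])
  show "Wfun \<alpha> \<in> HN N" if "\<alpha> \<in> LambdaStar N" for \<alpha>
    using Wfun_in_span[OF that] by (simp add: HN_eq_span)
  show "\<forall>\<alpha>\<in>LambdaStar N. c \<alpha> = 0" if "(\<lambda>x. \<Sum>\<alpha>\<in>LambdaStar N. c \<alpha> * Wfun \<alpha> x) = (\<lambda>x. 0)" for c
    using that by (rule Wfun_lincomb_eq_0)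
qed

end
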